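(* For every Büchi automaton $A$ over the alphabet $2^{AP}$, $\mathrm{supp}(A)$ is an LTL theory, i.e., $\mathrm{Cn}_{LTL}(\mathrm{supp}(A))=\mathrm{supp}(A)$.
   Context: Fix a finite nonempty $AP$. LTL formulae $\varphi::=\bot\mid p\mid\neg\varphi\mid\varphi\lor\varphi\mid X\varphi\mid\varphi U\varphi$ with the standard trace semantics over $(2^{AP})^\omega$. Kripke structure $M=(S,I,T,\lambda)$: finite $S$, nonempty $I\subseteq S$, left-total $T$, $\lambda:S\to2^{AP}$; traces $\lambda(s_0)\lambda(s_1)\dots$ along paths from $I$; $M\models\varphi$ iff all traces of $M$ satisfy $\varphi$. $\mathrm{Cn}_{LTL}(X)$ = formulae satisfied by every Kripke structure satisfying all of $X$. Büchi automaton $A=(Q,\Sigma,\Delta,Q_0,R)$ accepts an infinite word iff there is a run from an initial state along $\Delta$ visiting $R$ infinitely often; $\mathcal{L}(A)$ its language. $\mathrm{supp}(A):=\{\varphi\mid\pi\models\varphi\ \forall\pi\in\mathcal{L}(A)\}$. *)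

theory Defs
  imports Main "HOL-Library.Infinite_Set"
begin

datatype 'ap ltl =
    Bot
  | Prop 'ap
  | Neg "'ap ltl"
  | Or "'ap ltl" "'ap ltl"
  | Next "'ap ltl"
  | Until "'ap ltl" "'ap ltl"

type_synonym 'ap word = "nat \<Rightarrow> 'ap set"

definition suffix_word :: "nat \<Rightarrow> 'ap word \<Rightarrow> 'ap word" where
  "suffix_word k w = (\<lambda>i. w (i + k))"

fun ltl_sat :: "'ap word \<Rightarrow> 'ap ltl \<Rightarrow> bool" where
  "ltl_sat w Bot = False"
| "ltl_sat w (Prop p) = (p \<in> w 0)"
| "ltl_sat w (Neg \<phi>) = (\<not> ltl_sat w \<phi>)"
| "ltl_sat w (Or \<phi> \<psi>) = (ltl_sat w \<phi> \<or> ltl_sat w \<psi>)"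
| "ltl_sat w (Next \<phi>) = ltl_sat (suffix_word 1 w) \<phi>"
| "ltl_sat w (Until \<phi> \<psi>) =
     (\<exists>k. ltl_sat (suffix_word k w) \<psi> \<and> (\<forall>j<k. ltl_sat (suffix_word j w) \<phi>))"

text \<open>States are taken to be natural numbers;
  since S is required to be finite, every finite Kripke structure is isomorphic to one of
  this form, and LTL satisfaction depends only on the trace set.\<close>
record 'ap kripke =
  kS :: "nat set"
  kI :: "nat set"
  kT :: "(nat \<times> nat) set"
  kL :: "nat \<Rightarrow> 'ap set"

definition kripke_wf :: "'ap kripke \<Rightarrow> bool" where
  "kripke_wf M \<longleftrightarrow> finite (kS M) \<and> kI M \<noteq> {} \<and> kI M \<subseteq> kS M \<and> kT M \<subseteq> kS M \<times> kS M
     \<and> (\<forall>s\<in>kS M. \<exists>t. (s, t) \<in> kT M)"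

definition kripke_traces :: "'ap kripke \<Rightarrow> 'ap word set" where
  "kripke_traces M = {(\<lambda>i. kL M (p i)) | p.
      p 0 \<in> kI M \<and> (\<forall>i. (p i, p (Suc i)) \<in> kT M)}"

definition kripke_models :: "'ap kripke \<Rightarrow> 'ap ltl \<Rightarrow> bool" where
  "kripke_models M \<phi> \<longleftrightarrow> (\<forall>\<pi>\<in>kripke_traces M. ltl_sat \<pi> \<phi>)"

definition Cn_LTL :: "('ap::finite) ltl set \<Rightarrow> 'ap ltl set" where
  "Cn_LTL X = {\<phi>. \<forall>M. kripke_wf M \<longrightarrow> (\<forall>\<psi>\<in>X. kripke_models M \<psi>) \<longrightarrow> kripke_models M \<phi>}"

text \<open>Buechi automata (Q, Sigma, Delta, Q0, R) over the alphabet 2^AP (the full type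
  'ap set); states of type 'q with Q finite.\<close>
record ('q, 'ap) buchi =
  bQ :: "'q set"
  bDelta :: "('q \<times> 'ap set \<times> 'q) set"
  bQ0 :: "'q set"
  bR :: "'q set"

definition buchi_wf :: "('q, 'ap) buchi \<Rightarrow> bool" where
  "buchi_wf A \<longleftrightarrow> finite (bQ A) \<and> bQ0 A \<subseteq> bQ A \<and> bR A \<subseteq> bQ A
     \<and> (\<forall>(q, a, q')\<in>bDelta A. q \<in> bQ A \<and> q' \<in> bQ A)"

definition buchi_lang :: "('q, 'ap) buchi \<Rightarrow> 'ap word set" where
  "buchi_lang A = {w. \<exists>r. r 0 \<in> bQ0 A \<and> (\<forall>i. (r i, w i, r (Suc i)) \<in> bDelta A)
      \<and> (\<exists>\<^sub>\<infinity> i. r i \<in> bR A)}"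

definition supp :: "('q, 'ap) buchi \<Rightarrow> 'ap ltl set" where
  "supp A = {\<phi>. \<forall>\<pi>\<in>buchi_lang A. ltl_sat \<pi> \<phi>}"

end

theory Submission
  imports Defs
begin

text \<open>The inclusion \<open>supp A \<subseteq> Cn_LTL (supp A)\<close> is trivial. Conversely, let an accepted word \<pi>
  violate \<phi>. Label each position m of \<pi> by the state of an accepting run and the set of
  subformulas of \<phi> true at m. By pigeonhole there are positions i < j with equal labels, an
  accepting state in between, and every subformula true somewhere after i already true
  somewhere in [i, j). The lasso word that follows \<pi> up to j and then loops back to i is again
  accepted, and each subformula of \<phi> has the same truth value at each of its positions as at
  the corresponding position of \<pi>; so it violates \<phi> as well. Being the only trace of a finite
  Kripke structure, it yields a model of \<open>supp A\<close> that does not satisfy \<phi>.\<close>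

definition holds :: "'ap word \<Rightarrow> nat \<Rightarrow> 'ap ltl \<Rightarrow> bool" where
  "holds w n \<phi> = ltl_sat (suffix_word n w) \<phi>"

lemma suffix_word_suffix_word: "suffix_word k (suffix_word n w) = suffix_word (n + k) w"
  unfolding suffix_word_def by (simp add: algebra_simps)

lemma ltl_sat_iff_holds_0: "ltl_sat w \<phi> = holds w 0 \<phi>"
  by (simp add: holds_def suffix_word_def)

lemma holds_simps [simp]:
  "\<not> holds w n Bot"
  "holds w n (Prop p) = (p \<in> w n)"
  "holds w n (Neg a) = (\<not> holds w n a)"
  "holds w n (Or a b) = (holds w n a \<or> holds w n b)"
  "holds w n (Next a) = holds w (Suc n) a"
  by (simp_all add: holds_def suffix_word_suffix_word) (simp add: suffix_word_def)

lemma holds_Until: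
  "holds w n (Until a b) = (\<exists>k. holds w (n + k) b \<and> (\<forall>l<k. holds w (n + l) a))"
  by (simp add: holds_def suffix_word_suffix_word)

lemma holds_Until_unfold:
  "holds w n (Until a b) = (holds w n b \<or> holds w n a \<and> holds w (Suc n) (Until a b))"
proof -
  have ex_nat_cases: "(\<exists>k::nat. P k) \<longleftrightarrow> P 0 \<or> (\<exists>k. P (Suc k))" for P
    by (metis not0_implies_Suc)
  show ?thesis
    unfolding holds_Until by (subst ex_nat_cases) (auto simp: All_less_Suc2)
qed

lemma invariant_excludes:
  assumes "P n" and "\<And>m. P m \<Longrightarrow> P (Suc m) \<and> \<not> Q m"
  shows "n \<le> m \<Longrightarrow> \<not> Q m"
proof -
  have "P (n + l)" for l
    using assms by (induction l) auto
  then show "n \<le> m \<Longrightarrow> \<not> Q m"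
    using assms(2) le_Suc_ex by blast
qed

fun subformulas :: "'ap ltl \<Rightarrow> 'ap ltl set" where
  "subformulas Bot = {Bot}"
| "subformulas (Prop p) = {Prop p}"
| "subformulas (Neg a) = insert (Neg a) (subformulas a)"
| "subformulas (Or a b) = insert (Or a b) (subformulas a \<union> subformulas b)"
| "subformulas (Next a) = insert (Next a) (subformulas a)"
| "subformulas (Until a b) = insert (Until a b) (subformulas a \<union> subformulas b)"

lemma finite_subformulas: "finite (subformulas \<phi>)"
  by (induction \<phi>) auto

lemma subformulas_self [simp]: "\<phi> \<in> subformulas \<phi>"
  by (cases \<phi>) auto

lemma subformulas_trans: "\<psi> \<in> subformulas \<phi> \<Longrightarrow> subformulas \<psi> \<subseteq> subformulas \<phi>"
  by (induction \<phi>) auto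

text \<open>In either direction, a position m where the two sides disagree on \<open>Until a b\<close> is
  followed by another one at m + 1, with b false on \<sigma> at m; so b never holds on \<sigma> from n on,
  which contradicts the side on which \<open>Until a b\<close> holds.\<close>

lemma holds_reindex_Until:
  fixes \<pi> :: "'ap word" and f :: "nat \<Rightarrow> nat"
  defines "\<sigma> \<equiv> \<pi> \<circ> f"
  assumes a: "\<And>m. holds \<sigma> m a = holds \<pi> (f m) a"
    and b: "\<And>m. holds \<sigma> m b = holds \<pi> (f m) b"
    and step: "\<And>m. holds \<pi> (f (Suc m)) (Until a b) = holds \<pi> (Suc (f m)) (Until a b)"
    and recur: "\<And>n k. f n \<le> k \<Longrightarrow> holds \<pi> k b \<Longrightarrow> \<exists>m\<ge>n. holds \<pi> (f m) b"
  shows "holds \<sigma> n (Until a b) = holds \<pi> (f n) (Until a b)"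
proof
  assume \<sigma>_Until: "holds \<sigma> n (Until a b)"
  then obtain k where "holds \<sigma> (n + k) b"
    unfolding holds_Until by blast
  moreover
  let ?P = "\<lambda>m. holds \<sigma> m (Until a b) \<and> \<not> holds \<pi> (f m) (Until a b)"
  have "?P (Suc m) \<and> \<not> holds \<sigma> m b" if "?P m" for m
    using that holds_Until_unfold[of \<sigma> m a b] holds_Until_unfold[of \<pi> "f m" a b] a b step
    by auto
  ultimately show "holds \<pi> (f n) (Until a b)"
    using invariant_excludes[of ?P n "\<lambda>m. holds \<sigma> m b" "n + k"] \<sigma>_Until by auto
next
  assume \<pi>_Until: "holds \<pi> (f n) (Until a b)"
  then obtain k where "holds \<pi> (f n + k) b"
    unfolding holds_Until by blast
  then obtain m where "m \<ge> n" "holds \<sigma> m b"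
    using recur[of n "f n + k"] b by auto
  moreover
  let ?P = "\<lambda>m. \<not> holds \<sigma> m (Until a b) \<and> holds \<pi> (f m) (Until a b)"
  have "?P (Suc m) \<and> \<not> holds \<sigma> m b" if "?P m" for m
    using that holds_Until_unfold[of \<sigma> m a b] holds_Until_unfold[of \<pi> "f m" a b] a b step
    by auto
  ultimately show "holds \<sigma> n (Until a b)"
    using invariant_excludes[of ?P n "\<lambda>m. holds \<sigma> m b"] \<pi>_Until by auto
qed

lemma holds_reindex:
  fixes \<pi> :: "'ap word" and f :: "nat \<Rightarrow> nat"
  assumes step: "\<And>\<psi> m. \<psi> \<in> subformulas \<phi> \<Longrightarrow> holds \<pi> (f (Suc m)) \<psi> = holds \<pi> (Suc (f m)) \<psi>"
    and recur: "\<And>\<psi> n k. \<psi> \<in> subformulas \<phi> \<Longrightarrow> f n \<le> k \<Longrightarrow> holds \<pi> k \<psi> \<Longrightarrow> \<exists>m\<ge>n. holds \<pi> (f m) \<psi>"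
  shows "holds (\<pi> \<circ> f) n \<phi> = holds \<pi> (f n) \<phi>"
proof -
  have "\<psi> \<in> subformulas \<phi> \<Longrightarrow> holds (\<pi> \<circ> f) n \<psi> = holds \<pi> (f n) \<psi>" for \<psi> n
  proof (induction \<psi> arbitrary: n)
    case (Neg a)
    then have "a \<in> subformulas \<phi>" using subformulas_trans by fastforce
    then show ?case using Neg.IH by simp
  next
    case (Or a b)
    then have "a \<in> subformulas \<phi>" "b \<in> subformulas \<phi>" using subformulas_trans by fastforce+
    then show ?case using Or.IH by simp
  next
    case (Next a)
    then have "a \<in> subformulas \<phi>" using subformulas_trans by fastforce
    then show ?case using Next.IH step by simp
  next
    case (Until a b)
    have "a \<in> subformulas \<phi>" "b \<in> subformulas \<phi>"
      using subformulas_trans[OF Until.prems] by fastforce+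
    then show ?case
      using holds_reindex_Until[of \<pi> f a b] Until step recur by blast
  qed simp_all
  then show ?thesis by simp
qed

definition lasso_next :: "nat \<Rightarrow> nat \<Rightarrow> nat \<Rightarrow> nat" where
  "lasso_next i j m = (if Suc m < j then Suc m else i)"

fun lasso_pos :: "nat \<Rightarrow> nat \<Rightarrow> nat \<Rightarrow> nat" where
  "lasso_pos i j 0 = 0"
| "lasso_pos i j (Suc n) = lasso_next i j (lasso_pos i j n)"

lemma lasso_pos_less: "i < j \<Longrightarrow> lasso_pos i j n < j"
  by (induction n) (auto simp: lasso_next_def)

lemma lasso_pos_Suc_cases:
  assumes "i < j"
  obtains "lasso_pos i j (Suc n) = Suc (lasso_pos i j n)"
  | "Suc (lasso_pos i j n) = j" "lasso_pos i j (Suc n) = i"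
  using lasso_pos_less[OF assms, of n]
  by (cases "Suc (lasso_pos i j n) < j") (auto simp: lasso_next_def intro: that)

lemma lasso_pos_add: "lasso_pos i j n + d < j \<Longrightarrow> lasso_pos i j (n + d) = lasso_pos i j n + d"
  by (induction d) (auto simp: lasso_next_def)

lemma lasso_pos_returns:
  assumes "i < j"
  shows "\<exists>n\<ge>m. lasso_pos i j n = i"
proof -
  let ?d = "j - Suc (lasso_pos i j m)"
  have "lasso_pos i j (m + ?d) = j - 1"
    using lasso_pos_add[of i j m ?d] lasso_pos_less[OF assms, of m] by simp
  then have "lasso_pos i j (Suc (m + ?d)) = i"
    using assms by (simp add: lasso_next_def)
  then show ?thesis by (intro exI[of _ "Suc (m + ?d)"]) simp
qed

lemma lasso_pos_hits:
  assumes "i \<le> a" "a < j"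
  shows "\<exists>n\<ge>m. lasso_pos i j n = a"
proof -
  obtain n where "n \<ge> m" "lasso_pos i j n = i"
    using lasso_pos_returns assms by (meson le_less_trans)
  then show ?thesis
    using lasso_pos_add[of i j n "a - i"] assms by (intro exI[of _ "n + (a - i)"]) simp
qed

lemma holds_lasso:
  assumes "i < j"
    and same_type: "\<forall>\<psi>\<in>subformulas \<phi>. holds \<pi> i \<psi> = holds \<pi> j \<psi>"
    and witnessed: "\<forall>\<psi>\<in>subformulas \<phi>. \<forall>k\<ge>i. holds \<pi> k \<psi> \<longrightarrow> (\<exists>q. i \<le> q \<and> q < j \<and> holds \<pi> q \<psi>)"
  shows "holds (\<pi> \<circ> lasso_pos i j) n \<phi> = holds \<pi> (lasso_pos i j n) \<phi>"
proof (rule holds_reindex)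
  fix \<psi> m assume "\<psi> \<in> subformulas \<phi>"
  then show "holds \<pi> (lasso_pos i j (Suc m)) \<psi> = holds \<pi> (Suc (lasso_pos i j m)) \<psi>"
    using same_type by (cases rule: lasso_pos_Suc_cases[OF \<open>i < j\<close>, of m]) auto
next
  fix \<psi> n k
  assume \<psi>: "\<psi> \<in> subformulas \<phi>" and "lasso_pos i j n \<le> k" "holds \<pi> k \<psi>"
  show "\<exists>m\<ge>n. holds \<pi> (lasso_pos i j m) \<psi>"
  proof (cases "k < j")
    case True
    then show ?thesis
      using lasso_pos_add[of i j n "k - lasso_pos i j n"] \<open>lasso_pos i j n \<le> k\<close> \<open>holds \<pi> k \<psi>\<close>
      by (intro exI[of _ "n + (k - lasso_pos i j n)"]) simp
  next
    case False
    then have "i \<le> k" using \<open>i < j\<close> by simp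
    then obtain q where "i \<le> q" "q < j" "holds \<pi> q \<psi>"
      using witnessed \<psi> \<open>holds \<pi> k \<psi>\<close> by blast
    then show ?thesis
      using lasso_pos_hits[of i q j n] by metis
  qed
qed

lemma lasso_in_buchi_lang:
  assumes run: "r 0 \<in> bQ0 A" "\<forall>m. (r m, \<pi> m, r (Suc m)) \<in> bDelta A"
    and "i < j" "r i = r j"
    and accepting: "i \<le> a" "a < j" "r a \<in> bR A"
  shows "\<pi> \<circ> lasso_pos i j \<in> buchi_lang A"
proof -
  have "(r (lasso_pos i j m), \<pi> (lasso_pos i j m), r (lasso_pos i j (Suc m))) \<in> bDelta A" for m
  proof (cases rule: lasso_pos_Suc_cases[OF \<open>i < j\<close>, of m])
    case 1
    then show ?thesis using run(2) by simp
  next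
    case 2
    then show ?thesis using run(2)[rule_format, of "lasso_pos i j m"] \<open>r i = r j\<close> by simp
  qed
  moreover have "\<exists>\<^sub>\<infinity>m. r (lasso_pos i j m) \<in> bR A"
    unfolding INFM_nat_le using lasso_pos_hits[OF accepting(1,2)] accepting(3) by metis
  ultimately show ?thesis
    unfolding buchi_lang_def using run(1) by (intro CollectI exI[of _ "r \<circ> lasso_pos i j"]) simp
qed

definition lasso_kripke :: "nat \<Rightarrow> nat \<Rightarrow> 'ap word \<Rightarrow> 'ap kripke" where
  "lasso_kripke i j \<pi> = \<lparr>kS = {..<j}, kI = {0}, kT = {(m, lasso_next i j m) | m. m < j}, kL = \<pi>\<rparr>"

lemma kripke_wf_lasso_kripke: "i < j \<Longrightarrow> kripke_wf (lasso_kripke i j \<pi>)"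
  by (auto simp: kripke_wf_def lasso_kripke_def lasso_next_def)

lemma kripke_traces_lasso_kripke:
  assumes "i < j"
  shows "kripke_traces (lasso_kripke i j \<pi>) = {\<pi> \<circ> lasso_pos i j}"
proof -
  have "p = lasso_pos i j"
    if "p 0 = 0" "\<forall>m. \<exists>l. p m = l \<and> p (Suc m) = lasso_next i j l \<and> l < j" for p
  proof
    fix n show "p n = lasso_pos i j n"
      using that by (induction n) auto
  qed
  moreover have "\<forall>m. lasso_pos i j m < j"
    using lasso_pos_less[OF assms] by blast
  ultimately show ?thesis
    unfolding kripke_traces_def lasso_kripke_def by (auto simp: comp_def)
qed

lemma lasso_cut:
  fixes r :: "nat \<Rightarrow> 'q" and P :: "'b \<Rightarrow> nat \<Rightarrow> bool"
  assumes "finite (range r)" "\<exists>\<^sub>\<infinity>m. r m \<in> R" "finite S"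
  obtains i j a where "i < j" "r i = r j" "i \<le> a" "a < j" "r a \<in> R"
    "\<forall>\<psi>\<in>S. P \<psi> i = P \<psi> j"
    "\<forall>\<psi>\<in>S. \<forall>k\<ge>i. P \<psi> k \<longrightarrow> (\<exists>q. i \<le> q \<and> q < j \<and> P \<psi> q)"
proof -
  define label where "label m = (r m, {\<psi>\<in>S. P \<psi> m})" for m
  have "range label \<subseteq> range r \<times> Pow S"
    by (auto simp: label_def)
  then have "finite (range label)"
    using assms(1,3) finite_subset by blast
  then obtain i where "infinite {m. label m = label i}"
    using pigeonhole_infinite[of "UNIV :: nat set" label] by auto
  then have recurring: "\<exists>\<^sub>\<infinity>m. label m = label i"
    by (simp add: INFM_iff_infinite)
  obtain a where a: "i \<le> a" "r a \<in> R"
    using assms(2) by (auto simp: INFM_nat_le)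
  have "\<forall>\<psi>\<in>S. MOST m. (\<exists>k\<ge>i. P \<psi> k) \<longrightarrow> (\<exists>q. i \<le> q \<and> q < m \<and> P \<psi> q)"
    by (auto simp: MOST_nat)
  then have "MOST m. \<forall>\<psi>\<in>S. (\<exists>k\<ge>i. P \<psi> k) \<longrightarrow> (\<exists>q. i \<le> q \<and> q < m \<and> P \<psi> q)"
    by (rule eventually_ball_finite[OF assms(3)])
  moreover have "MOST m. a < m"
    by (auto simp: MOST_nat)
  ultimately have "MOST m. a < m \<and> (\<forall>\<psi>\<in>S. (\<exists>k\<ge>i. P \<psi> k) \<longrightarrow> (\<exists>q. i \<le> q \<and> q < m \<and> P \<psi> q))"
    by (simp add: eventually_conj_iff)
  with recurring have "\<exists>\<^sub>\<infinity>m. label m = label i \<and> a < m \<and>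
      (\<forall>\<psi>\<in>S. (\<exists>k\<ge>i. P \<psi> k) \<longrightarrow> (\<exists>q. i \<le> q \<and> q < m \<and> P \<psi> q))"
    by (rule INFM_conjI)
  then obtain j where "label j = label i" "a < j"
    and "\<forall>\<psi>\<in>S. (\<exists>k\<ge>i. P \<psi> k) \<longrightarrow> (\<exists>q. i \<le> q \<and> q < j \<and> P \<psi> q)"
    by (auto elim: INFM_E)
  then show thesis
    using that[of i j a] a by (auto simp: label_def)
qed

lemma buchi_lang_lasso_agrees:
  assumes "buchi_wf A" "\<pi> \<in> buchi_lang A"
  obtains i j where "i < j" "\<pi> \<circ> lasso_pos i j \<in> buchi_lang A"
    "ltl_sat (\<pi> \<circ> lasso_pos i j) \<phi> = ltl_sat \<pi> \<phi>"
proof -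
  obtain r where run: "r 0 \<in> bQ0 A" "\<forall>m. (r m, \<pi> m, r (Suc m)) \<in> bDelta A"
    and accepting: "\<exists>\<^sub>\<infinity>m. r m \<in> bR A"
    using assms(2) unfolding buchi_lang_def by blast
  have "range r \<subseteq> bQ A"
    using run(2) assms(1) unfolding buchi_wf_def by fast
  then have "finite (range r)"
    using assms(1) finite_subset unfolding buchi_wf_def by blast
  then obtain i j a where "i < j" and cut: "r i = r j" "i \<le> a" "a < j" "r a \<in> bR A"
    and types: "\<forall>\<psi>\<in>subformulas \<phi>. holds \<pi> i \<psi> = holds \<pi> j \<psi>"
      "\<forall>\<psi>\<in>subformulas \<phi>. \<forall>k\<ge>i. holds \<pi> k \<psi> \<longrightarrow> (\<exists>q. i \<le> q \<and> q < j \<and> holds \<pi> q \<psi>)"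
    using lasso_cut[OF _ accepting finite_subformulas, where P = "\<lambda>\<psi> k. holds \<pi> k \<psi>"] by blast
  show thesis
  proof (rule that[OF \<open>i < j\<close>])
    show "\<pi> \<circ> lasso_pos i j \<in> buchi_lang A"
      using lasso_in_buchi_lang[OF run \<open>i < j\<close> cut] .
    show "ltl_sat (\<pi> \<circ> lasso_pos i j) \<phi> = ltl_sat \<pi> \<phi>"
      using holds_lasso[OF \<open>i < j\<close> types, of 0] by (simp add: ltl_sat_iff_holds_0)
  qed
qed

theorem mainTheorem13:
  fixes A :: "('q, 'ap::finite) buchi"
  assumes "buchi_wf A"
  shows "Cn_LTL (supp A) = supp A"
proof
  show "supp A \<subseteq> Cn_LTL (supp A)"
    unfolding Cn_LTL_def by blast
  show "Cn_LTL (supp A) \<subseteq> supp A"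
  proof
    fix \<phi> assume \<phi>: "\<phi> \<in> Cn_LTL (supp A)"
    show "\<phi> \<in> supp A"
      unfolding supp_def
    proof (intro CollectI ballI)
      fix \<pi> assume "\<pi> \<in> buchi_lang A"
      then obtain i j where "i < j" and lasso_accepted: "\<pi> \<circ> lasso_pos i j \<in> buchi_lang A"
        and agrees: "ltl_sat (\<pi> \<circ> lasso_pos i j) \<phi> = ltl_sat \<pi> \<phi>"
        using buchi_lang_lasso_agrees[OF assms] by blast
      let ?M = "lasso_kripke i j \<pi>"
      have traces: "kripke_traces ?M = {\<pi> \<circ> lasso_pos i j}"
        using kripke_traces_lasso_kripke[OF \<open>i < j\<close>] .
      have "\<forall>\<psi>\<in>supp A. kripke_models ?M \<psi>"
        using lasso_accepted by (simp add: supp_def kripke_models_def traces)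
      then have "kripke_models ?M \<phi>"
        using \<phi> kripke_wf_lasso_kripke[OF \<open>i < j\<close>] unfolding Cn_LTL_def by blast
      then show "ltl_sat \<pi> \<phi>"
        using agrees by (simp add: kripke_models_def traces)
    qed
  qed
qed
end
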